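(* There is a universal constant $C\ge 2$ such that the following holds. Let $L,M,n\ge1$. For every unsatisfiable CNF $F$ over $n$ variables and every $s_F\ge C\cdot(nLM+|F|)$ such that every resolution refutation of $F$ has more than $s_F$ clauses, there is a decision tree reduction of block-depth $O(n)$ from $\mathrm{rwPHP}(\mathsf{PLS})$ instances with parameters $L,M$ to $\textsc{Refuter}(s(F\vdash_{\mathsf{Res}}\bot)\le s_F)$.
   Context: $[n]=\{0,\dots,n-1\}$; $|F|$ is the number of clauses of $F$. $\textsc{Iter}$ on $[L]$: input $S:[L]\to[L]$; a solution is $x$ with $x=0\wedge S(0)=0$, or $S(x)<x$, or $S(x)>x\wedge S(S(x))=S(x)$. $\mathrm{rwPHP}(\mathsf{PLS})$ with parameters $L,M$: input consists of $f:[M]\to[2M]$; for each $y\in[2M]$ an $\textsc{Iter}$ instance $S_y:[L]\to[L]$; and for each $y$ a function $g_y:[L]\to[M]$. A solution is a pair $(y,a)$ with $a$ a solution of the $\textsc{Iter}$ instance $S_y$ and $f(g_y(a))\ne y$. Resolution refutation format: axioms $C_{-m},\dots,C_{-1}$ are the clauses of $F$; a purported refutation is a sequence of nodes $C_0,\dots,C_{L'-1}$, each with a set of literals, a tag ``resolution'' (with indices $-m\le j,k<i$ and a variable $x_a$) or ``weakening'' (with an index $-m\le j<i$). Node $i$ is valid if for resolution $C_j=x_a\vee D$, $C_k=\overline{x}_a\vee E$, $C_i=D\vee E$; for weakening $C_i=C_j\vee D$; and $C_{L'-1}=\bot$. $\textsc{Refuter}(s(F\vdash_{\mathsf{Res}}\bot)\le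 s_F)$: input is a purported refutation of $F$ with at most $s_F$ nodes; a solution is an index of an invalid node. Each node is a block; block-depth counts distinct blocks queried, and a decision tree reduction computes each node of the output and maps solutions back via decision trees on the input. *)

theory Defs
  imports Main
begin

datatype ('i, 'v, 'o) dtree = Leaf 'o | Query 'i "'v \<Rightarrow> ('i, 'v, 'o) dtree"

primrec dt_eval :: "('i, 'v, 'o) dtree \<Rightarrow> ('i \<Rightarrow> 'v) \<Rightarrow> 'o" where
  "dt_eval (Leaf out) x = out"
| "dt_eval (Query i t) x = dt_eval (t (x i)) x"

primrec dt_blocks :: "('i, 'v, 'o) dtree \<Rightarrow> ('i \<Rightarrow> 'v) \<Rightarrow> 'i set" where
  "dt_blocks (Leaf out) x = {}"
| "dt_blocks (Query i t) x = insert i (dt_blocks (t (x i)) x)"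

definition dt_reduction ::
  "('i \<Rightarrow> 'v) set \<Rightarrow> (('i \<Rightarrow> 'v) \<Rightarrow> 's \<Rightarrow> bool) \<Rightarrow>
   ('j \<Rightarrow> 'w) set \<Rightarrow> (('j \<Rightarrow> 'w) \<Rightarrow> 't \<Rightarrow> bool) \<Rightarrow>
   ('j \<Rightarrow> ('i, 'v, 'w) dtree) \<Rightarrow> ('t \<Rightarrow> ('i, 'v, 's) dtree) \<Rightarrow> nat \<Rightarrow> bool" where
  "dt_reduction domP solP domQ solQ Tout Tsol d \<longleftrightarrow>
     (\<forall>x \<in> domP.
        (\<lambda>j. dt_eval (Tout j) x) \<in> domQ \<and>
        (\<forall>out. solQ (\<lambda>j. dt_eval (Tout j) x) out \<longrightarrow> solP x (dt_eval (Tsol out) x)) \<and>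
        (\<forall>j. card (dt_blocks (Tout j) x) \<le> d) \<and>
        (\<forall>out. card (dt_blocks (Tsol out) x) \<le> d))"

definition iter_sol :: "nat \<Rightarrow> (nat \<Rightarrow> nat) \<Rightarrow> nat \<Rightarrow> bool" where
  "iter_sol L S a \<longleftrightarrow> a < L \<and>
     ((a = 0 \<and> S 0 = 0) \<or> S a < a \<or> (S a > a \<and> S (S a) = S a))"

text \<open>Blocks of an rwPHP(PLS) instance: f(i), S_y(a), g_y(a).\<close>
datatype rw_block = FB nat | SB nat nat | GB nat nat

definition rw_dom :: "nat \<Rightarrow> nat \<Rightarrow> (rw_block \<Rightarrow> nat) set" where
  "rw_dom L M = {x.
     (\<forall>i. if i < M then x (FB i) < 2 * M else x (FB i) = 0) \<and>
     (\<forall>y a. if y < 2 * M \<and> a < L then x (SB y a) < L else x (SB y a) = 0) \<and>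
     (\<forall>y a. if y < 2 * M \<and> a < L then x (GB y a) < M else x (GB y a) = 0)}"

definition rw_sol :: "nat \<Rightarrow> nat \<Rightarrow> (rw_block \<Rightarrow> nat) \<Rightarrow> nat \<times> nat \<Rightarrow> bool" where
  "rw_sol L M x ya \<longleftrightarrow> (case ya of (y, a) \<Rightarrow>
     y < 2 * M \<and> iter_sol L (\<lambda>z. x (SB y z)) a \<and> x (FB (x (GB y a))) \<noteq> y)"

type_synonym lit = "nat \<times> bool"   \<comment> \<open>(a, True) is x_a, (a, False) is its negation\<close>
type_synonym clause = "lit set"
type_synonym cnf = "clause list"

definition cnf_over :: "nat \<Rightarrow> cnf \<Rightarrow> bool" where
  "cnf_over n F \<longleftrightarrow> (\<forall>C \<in> set F. \<forall>l \<in> C. fst l < n)"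

definition unsat :: "cnf \<Rightarrow> bool" where
  "unsat F \<longleftrightarrow> (\<forall>\<alpha> :: nat \<Rightarrow> bool. \<exists>C \<in> set F. \<forall>l \<in> C. \<alpha> (fst l) \<noteq> snd l)"

datatype rule = Res int int nat | Weak int

type_synonym node = "clause \<times> rule"

text \<open>C_j: for -m \<le> j < 0 the axiom F ! (m + j), i.e. C_{-m},...,C_{-1} are the clauses of F;
  for j \<ge> 0 the clause of node j.\<close>
definition clause_at :: "cnf \<Rightarrow> (nat \<Rightarrow> node) \<Rightarrow> int \<Rightarrow> clause" where
  "clause_at F P j = (if j < 0 then F ! nat (int (length F) + j) else fst (P (nat j)))"

definition node_valid :: "cnf \<Rightarrow> (nat \<Rightarrow> node) \<Rightarrow> nat \<Rightarrow> nat \<Rightarrow> bool" where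
  "node_valid F P Lp i \<longleftrightarrow>
     (case snd (P i) of
        Res j k a \<Rightarrow> - int (length F) \<le> j \<and> j < int i \<and> - int (length F) \<le> k \<and> k < int i \<and>
          (\<exists>D E. clause_at F P j = insert (a, True) D \<and>
                 clause_at F P k = insert (a, False) E \<and> fst (P i) = D \<union> E)
      | Weak j \<Rightarrow> - int (length F) \<le> j \<and> j < int i \<and>
          (\<exists>D. fst (P i) = clause_at F P j \<union> D)) \<and>
     (i = Lp - 1 \<longrightarrow> fst (P i) = {})"

definition is_refutation :: "cnf \<Rightarrow> (nat \<Rightarrow> node) \<Rightarrow> nat \<Rightarrow> bool" where
  "is_refutation F P Lp \<longleftrightarrow> Lp \<ge> 1 \<and> (\<forall>i < Lp. node_valid F P Lp i)"

definition ref_dom :: "nat \<Rightarrow> nat \<Rightarrow> (nat \<Rightarrow> node) set" where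
  "ref_dom n s = {P. \<forall>i < s. \<forall>l \<in> fst (P i). fst l < n}"

definition ref_sol :: "cnf \<Rightarrow> nat \<Rightarrow> (nat \<Rightarrow> node) \<Rightarrow> nat \<Rightarrow> bool" where
  "ref_sol F s P i \<longleftrightarrow> i < s \<and> \<not> node_valid F P s i"

end

theory Submission
  imports Defs
begin

text \<open>Read y < 2M as the pair (y div 2, odd y). Unwinding f from y for k steps spells a path of
  length k in the complete binary tree over the variables x_0, ..., x_(n-1), the address of y at
  depth k; the node of y at depth k carries the clause falsified exactly by this path. At depth n
  these clauses weaken axioms. One level up, resolving on x_k the clauses of 2i and 2i + 1 gives
  the clause of f(i). The clause of y is then carried along the ITER instance S_y: node a copies it
  from node S_y(a) > a, and a solution a copies it from the resolvent of g_y(a), which is the right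
  clause when f(g_y(a)) = y. At depth 0 the address is empty and the clause is empty. Hence every
  invalid node yields a solution of the rwPHP(PLS) instance, and every node reads only the n blocks
  of an address and three more.\<close>

primrec dt_bind :: "('i, 'v, 'a) dtree \<Rightarrow> ('a \<Rightarrow> ('i, 'v, 'b) dtree) \<Rightarrow> ('i, 'v, 'b) dtree" where
  "dt_bind (Leaf r) h = h r"
| "dt_bind (Query i t) h = Query i (\<lambda>v. dt_bind (t v) h)"

definition dt_query :: "'i \<Rightarrow> ('i, 'v, 'v) dtree" where
  "dt_query i = Query i Leaf"

lemma dt_eval_bind [simp]: "dt_eval (dt_bind t h) x = dt_eval (h (dt_eval t x)) x"
  by (induction t) auto

lemma dt_blocks_bind [simp]:
  "dt_blocks (dt_bind t h) x = dt_blocks t x \<union> dt_blocks (h (dt_eval t x)) x"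
  by (induction t) auto

lemma dt_eval_query [simp]: "dt_eval (dt_query i) x = x i"
  and dt_blocks_query [simp]: "dt_blocks (dt_query i) x = {i}"
  by (simp_all add: dt_query_def)

section \<open>Addresses and their clauses\<close>

fun addr :: "(rw_block \<Rightarrow> nat) \<Rightarrow> nat \<Rightarrow> nat \<Rightarrow> bool list" where
  "addr x 0 y = []"
| "addr x (Suc k) y = addr x k (x (FB (y div 2))) @ [odd y]"

fun addr_tree :: "nat \<Rightarrow> nat \<Rightarrow> (rw_block, nat, bool list) dtree" where
  "addr_tree 0 y = Leaf []"
| "addr_tree (Suc k) y =
     dt_bind (dt_query (FB (y div 2))) (\<lambda>v. dt_bind (addr_tree k v) (\<lambda>r. Leaf (r @ [odd y])))"

lemma dt_eval_addr_tree [simp]: "dt_eval (addr_tree k y) x = addr x k y"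
  by (induction k arbitrary: y) auto

lemma card_dt_blocks_addr_tree: "card (dt_blocks (addr_tree k y) x) \<le> k"
  by (induction k arbitrary: y) (simp_all add: card_insert_le_m1)

lemma length_addr [simp]: "length (addr x k y) = k"
  by (induction k arbitrary: y) auto

definition neg_clause :: "bool list \<Rightarrow> clause" where
  "neg_clause r = (\<lambda>j. (j, \<not> r ! j)) ` {..<length r}"

lemma neg_clause_Nil [simp]: "neg_clause [] = {}"
  by (simp add: neg_clause_def)

lemma neg_clause_snoc: "neg_clause (r @ [b]) = insert (length r, \<not> b) (neg_clause r)"
proof -
  have "(\<lambda>j. (j, \<not> (r @ [b]) ! j)) ` {..<length r} = (\<lambda>j. (j, \<not> r ! j)) ` {..<length r}"
    by (rule image_cong) (simp_all add: nth_append)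
  then show ?thesis by (simp add: neg_clause_def lessThan_Suc)
qed

lemma fst_less_length_if_neg_clause: "l \<in> neg_clause r \<Longrightarrow> fst l < length r"
  by (auto simp: neg_clause_def)

lemma unsat_falsified_axiom:
  assumes "cnf_over n F" "unsat F" "length r = n"
  shows "\<exists>c < length F. F ! c \<subseteq> neg_clause r"
proof -
  obtain C where C: "C \<in> set F" "\<forall>l \<in> C. r ! fst l \<noteq> snd l"
    using assms(2) unfolding unsat_def by (elim allE[of _ "\<lambda>j. r ! j"]) blast
  have "C \<subseteq> neg_clause r"
  proof
    fix l assume "l \<in> C"
    then have "fst l < n" "snd l = (\<not> r ! fst l)" using C assms(1) by (auto simp: cnf_over_def)
    then show "l \<in> neg_clause r" using assms(3) by (cases l) (simp add: neg_clause_def)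
  qed
  moreover obtain c where "c < length F" "F ! c = C"
    using C(1) by (auto simp: in_set_conv_nth)
  ultimately show ?thesis by blast
qed

lemma clause_at_nat [simp]: "clause_at F P (int p) = fst (P p)"
  by (simp add: clause_at_def)

lemma clause_at_axiom [simp]: "c < length F \<Longrightarrow> clause_at F P (int c - int (length F)) = F ! c"
  by (simp add: clause_at_def)

lemma clause_at_last: "F \<noteq> [] \<Longrightarrow> clause_at F P (-1) = last F"
  by (cases F rule: rev_cases) (auto simp: clause_at_def nth_append)

lemma node_valid_WeakI:
  assumes "P i = (C, Weak j)" "- int (length F) \<le> j" "j < int i" "clause_at F P j \<subseteq> C"
    and "i = Lp - 1 \<longrightarrow> C = {}"
  shows "node_valid F P Lp i"
proof -
  have "C = clause_at F P j \<union> C" using assms(4) by blast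
  then show ?thesis unfolding node_valid_def assms(1) prod.sel rule.case using assms(2,3,5) by blast
qed

lemma node_valid_ResI:
  assumes "P i = (D \<union> E, Res j k a)"
    and "- int (length F) \<le> j" "j < int i" "- int (length F) \<le> k" "k < int i"
    and "clause_at F P j = insert (a, True) D" "clause_at F P k = insert (a, False) E"
    and "i = Lp - 1 \<longrightarrow> D \<union> E = {}"
  shows "node_valid F P Lp i"
  unfolding node_valid_def assms(1) prod.sel rule.case using assms(2-) by blast

section \<open>The refutation built from an rwPHP(PLS) instance\<close>

lemma mult_add_eq_mult_add_iff:
  fixes t t' q q' w :: nat
  assumes "q < w" "q' < w"
  shows "t * w + q = t' * w + q' \<longleftrightarrow> t = t' \<and> q = q'"
proof
  assume eq: "t * w + q = t' * w + q'"
  have "(t * w + q) div w = t" "(t * w + q) mod w = q" using assms(1) by simp_all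
  then show "t = t' \<and> q = q'" unfolding eq using assms(2) by simp
qed simp

lemma rw_dom_SB_less: "x \<in> rw_dom L M \<Longrightarrow> y < 2 * M \<Longrightarrow> a < L \<Longrightarrow> x (SB y a) < L"
  unfolding rw_dom_def by (metis (no_types, lifting) mem_Collect_eq)

lemma rw_dom_GB_less: "x \<in> rw_dom L M \<Longrightarrow> y < 2 * M \<Longrightarrow> a < L \<Longrightarrow> x (GB y a) < M"
  unfolding rw_dom_def by (metis (no_types, lifting) mem_Collect_eq)

datatype slot = Leaf_node nat | Merge_node nat nat | Iter_node nat nat nat

locale rwphp_refuter =
  fixes n L M :: nat and F :: cnf and sF :: nat
  assumes n_pos: "1 \<le> n" and L_pos: "1 \<le> L" and M_pos: "1 \<le> M"
    and cnf_over: "cnf_over n F" and unsat: "unsat F"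
    and room: "2 * M + n * (M + 2 * M * L) < sF"
begin

definition width :: nat where
  "width = M + 2 * M * L"

fun slot_ok :: "slot \<Rightarrow> bool" where
  "slot_ok (Leaf_node z) \<longleftrightarrow> z < 2 * M"
| "slot_ok (Merge_node k i) \<longleftrightarrow> k < n \<and> i < M"
| "slot_ok (Iter_node k y a) \<longleftrightarrow> k < n \<and> y < 2 * M \<and> a < L"

definition level_start :: "nat \<Rightarrow> nat" where
  "level_start k = 2 * M + (n - 1 - k) * width"

definition iter_offset :: "nat \<Rightarrow> nat \<Rightarrow> nat" where
  "iter_offset y a = M + y * L + (L - 1 - a)"

text \<open>Levels are laid out from depth n upwards, so that premises precede conclusions; within a
  level the merge nodes come first, followed by the nodes of each ITER instance in decreasing
  order of a.\<close>

fun pos :: "slot \<Rightarrow> nat" where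
  "pos (Leaf_node z) = z"
| "pos (Merge_node k i) = level_start k + i"
| "pos (Iter_node k y a) = level_start k + iter_offset y a"

lemma not_iter_offset_less [simp]: "\<not> iter_offset y a < M"
  by (simp add: iter_offset_def)

lemma iter_offset_less_width: "y < 2 * M \<Longrightarrow> a < L \<Longrightarrow> iter_offset y a < width"
proof -
  assume "y < 2 * M" "a < L"
  then have "y * L + L \<le> 2 * M * L" using mult_le_mono1[of "Suc y" "2 * M" L] by simp
  then show ?thesis using \<open>a < L\<close> unfolding iter_offset_def width_def by linarith
qed

lemma iter_offset_eq_iff:
  assumes "a < L" "a' < L"
  shows "iter_offset y a = iter_offset y' a' \<longleftrightarrow> y = y' \<and> a = a'"
proof -
  have "y * L + (L - 1 - a) = y' * L + (L - 1 - a') \<longleftrightarrow> y = y' \<and> L - 1 - a = L - 1 - a'"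
    using assms by (intro mult_add_eq_mult_add_iff) simp_all
  moreover have "L - 1 - a = L - 1 - a' \<longleftrightarrow> a = a'" using assms by linarith
  ultimately show ?thesis unfolding iter_offset_def add.assoc add_left_cancel by (simp only:)
qed

lemma iter_offset_less_iff: "a < L \<Longrightarrow> s < L \<Longrightarrow> iter_offset y s < iter_offset y a \<longleftrightarrow> a < s"
  unfolding iter_offset_def by linarith

lemma not_level_start_add_less [simp]: "\<not> level_start k + q < 2 * M"
  by (simp add: level_start_def)

lemma M_le_width: "M \<le> width"
  by (simp add: width_def)

lemma level_start_add_eq_iff:
  "k < n \<Longrightarrow> k' < n \<Longrightarrow> q < width \<Longrightarrow> q' < width \<Longrightarrow>
    level_start k + q = level_start k' + q' \<longleftrightarrow> k = k' \<and> q = q'"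
  using mult_add_eq_mult_add_iff[of q width q' "n - 1 - k" "n - 1 - k'"]
  by (auto simp: level_start_def add.assoc)

lemma level_start_add_less: "k < n \<Longrightarrow> q < width \<Longrightarrow> level_start k + q < 2 * M + n * width"
proof -
  assume "k < n" "q < width"
  then have "Suc (n - 1 - k) * width \<le> n * width" by (intro mult_le_mono1) simp
  then show ?thesis using \<open>q < width\<close> by (simp add: level_start_def)
qed

lemma level_start_Suc: "Suc k < n \<Longrightarrow> level_start (Suc k) + width = level_start k"
proof -
  assume "Suc k < n"
  then have "n - 1 - k = Suc (n - 1 - Suc k)" by linarith
  then show ?thesis unfolding level_start_def by (simp only: mult_Suc add_ac)
qed

lemma pos_less: "pos s < 2 * M + n * width" if "slot_ok s"
proof (cases s)
  case (Merge_node k i)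
  then have "i < width" using that by (simp add: width_def)
  then show ?thesis using Merge_node that by (simp add: level_start_add_less)
qed (use that in \<open>auto intro!: level_start_add_less iter_offset_less_width\<close>)

lemma inj_on_pos: "inj_on pos (Collect slot_ok)"
proof (rule inj_onI, simp)
  fix s s' assume ok: "slot_ok s" "slot_ok s'" and eq: "pos s = pos s'"
  show "s = s'"
  proof (cases s)
    case (Leaf_node z)
    then show ?thesis using ok eq by (cases s') auto
  next
    case (Merge_node k i)
    then have i: "i < width" using ok M_le_width by simp
    show ?thesis
    proof (cases s')
      case (Merge_node k' i')
      then have "i' < width" using ok M_le_width by simp
      then show ?thesis using \<open>s = Merge_node k i\<close> Merge_node i ok eq
        by (simp add: level_start_add_eq_iff)
    next
      case (Iter_node k' y' a')
      then have "iter_offset y' a' < width" using ok by (simp add: iter_offset_less_width)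
      then show ?thesis using \<open>s = Merge_node k i\<close> Iter_node i ok eq
        by (simp add: level_start_add_eq_iff)
    qed (use Merge_node ok eq not_level_start_add_less[of k i] in simp)
  next
    case (Iter_node k y a)
    then have o: "iter_offset y a < width" using ok by (simp add: iter_offset_less_width)
    show ?thesis
    proof (cases s')
      case (Merge_node k' i')
      then have "i' < width" using ok M_le_width by simp
      then show ?thesis using \<open>s = Iter_node k y a\<close> Merge_node o ok eq
        by (auto simp: level_start_add_eq_iff)
    next
      case (Iter_node k' y' a')
      then have "iter_offset y' a' < width" using ok by (simp add: iter_offset_less_width)
      then show ?thesis using \<open>s = Iter_node k y a\<close> Iter_node o ok eq
        by (simp add: level_start_add_eq_iff iter_offset_eq_iff)
    qed (use Iter_node ok eq not_level_start_add_less[of k "iter_offset y a"] in simp)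
  qed
qed

definition slot_at :: "nat \<Rightarrow> slot option" where
  "slot_at j = (if j \<in> pos ` Collect slot_ok then Some (the_inv_into (Collect slot_ok) pos j) else None)"

lemma slot_at_pos: "slot_ok s \<Longrightarrow> slot_at (pos s) = Some s"
  by (simp add: slot_at_def inj_on_pos the_inv_into_f_f)

lemma slot_at_SomeD:
  assumes "slot_at j = Some s"
  shows "slot_ok s \<and> pos s = j"
proof -
  have j: "j \<in> pos ` Collect slot_ok" and "s = the_inv_into (Collect slot_ok) pos j"
    using assms by (auto simp: slot_at_def split: if_splits)
  then show ?thesis
    using the_inv_into_into[OF inj_on_pos j] f_the_inv_into_f[OF inj_on_pos j] by auto
qed

lemma pos_neq_last: "slot_ok s \<Longrightarrow> pos s \<noteq> sF - 1"
  using pos_less room by (fastforce simp: width_def)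

lemma slot_at_last: "slot_at (sF - 1) = None"
  using pos_neq_last unfolding slot_at_def by (metis (mono_tags) imageE mem_Collect_eq)

definition top_slot :: "nat \<Rightarrow> nat \<Rightarrow> slot" where
  "top_slot k z = (if k = n then Leaf_node z else Iter_node k z 0)"

lemma slot_ok_top_slot: "k < n \<Longrightarrow> z < 2 * M \<Longrightarrow> slot_ok (top_slot (Suc k) z)"
  using L_pos by (simp add: top_slot_def)

lemma pos_top_slot_less_Merge: "k < n \<Longrightarrow> z < 2 * M \<Longrightarrow> pos (top_slot (Suc k) z) < pos (Merge_node k i)"
proof (cases "Suc k = n")
  case False
  assume "k < n" "z < 2 * M"
  then have "pos (top_slot (Suc k) z) < level_start (Suc k) + width"
    using False L_pos by (simp add: top_slot_def iter_offset_less_width)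
  then show ?thesis using False \<open>k < n\<close> by (simp add: level_start_Suc)
qed (use not_level_start_add_less[of k i] in \<open>simp add: top_slot_def, linarith\<close>)

lemma pos_Merge_less_Iter: "g < M \<Longrightarrow> pos (Merge_node k g) < pos (Iter_node k y a)"
  using leI[OF not_iter_offset_less[of y a]] by simp

lemma pos_Iter_less_Iter: "a < s \<Longrightarrow> s < L \<Longrightarrow> pos (Iter_node k y s) < pos (Iter_node k y a)"
  by (simp add: iter_offset_less_iff)

declare pos.simps(2,3) [simp del]

text \<open>Unused positions hold a copy of the last axiom.\<close>

definition padding :: node where
  "padding = (last F, Weak (-1))"

definition final :: node where
  "final = ({}, Weak (int (pos (Iter_node 0 0 0))))"

definition axiom_index :: "bool list \<Rightarrow> nat" where
  "axiom_index r = (SOME c. c < length F \<and> F ! c \<subseteq> neg_clause r)"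

fun node_tree :: "slot \<Rightarrow> (rw_block, nat, node) dtree" where
  "node_tree (Leaf_node z) =
     dt_bind (addr_tree n z) (\<lambda>r. Leaf (neg_clause r, Weak (int (axiom_index r) - int (length F))))"
| "node_tree (Merge_node k i) =
     dt_bind (dt_query (FB i)) (\<lambda>y. dt_bind (addr_tree k y) (\<lambda>r.
       Leaf (neg_clause r,
         Res (int (pos (top_slot (Suc k) (2 * i)))) (int (pos (top_slot (Suc k) (2 * i + 1)))) k)))"
| "node_tree (Iter_node k y a) =
     dt_bind (dt_query (SB y a)) (\<lambda>s. dt_bind (dt_query (SB y s)) (\<lambda>s'.
     dt_bind (dt_query (GB y a)) (\<lambda>g. dt_bind (addr_tree k y) (\<lambda>r.
       Leaf (if (a = 0 \<and> s = 0) \<or> s < a \<or> (a < s \<and> s' = s)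
             then (neg_clause r, Weak (int (pos (Merge_node k g))))
             else if a < s then (neg_clause r, Weak (int (pos (Iter_node k y s))))
             else padding)))))"

definition out_tree :: "nat \<Rightarrow> (rw_block, nat, node) dtree" where
  "out_tree j = (case slot_at j of
      Some s \<Rightarrow> node_tree s
    | None \<Rightarrow> Leaf (if j = sF - 1 then final else padding))"

definition sol_at :: "nat \<Rightarrow> nat \<times> nat" where
  "sol_at j = (case slot_at j of Some (Iter_node k y a) \<Rightarrow> (y, a) | _ \<Rightarrow> (0, 0))"

definition refutation :: "(rw_block \<Rightarrow> nat) \<Rightarrow> nat \<Rightarrow> node" where
  "refutation x = (\<lambda>j. dt_eval (out_tree j) x)"

lemma refutation_pos: "slot_ok s \<Longrightarrow> refutation x (pos s) = dt_eval (node_tree s) x"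
  by (simp add: refutation_def out_tree_def slot_at_pos)

lemma dt_eval_node_tree_Iter:
  "a < L \<Longrightarrow> dt_eval (node_tree (Iter_node k y a)) x =
    (if iter_sol L (\<lambda>z. x (SB y z)) a
     then (neg_clause (addr x k y), Weak (int (pos (Merge_node k (x (GB y a))))))
     else if a < x (SB y a) then (neg_clause (addr x k y), Weak (int (pos (Iter_node k y (x (SB y a))))))
     else padding)"
  by (simp add: iter_sol_def)

lemma fst_dt_eval_node_tree_Iter:
  "a = 0 \<or> x (SB y a) \<noteq> a \<Longrightarrow> fst (dt_eval (node_tree (Iter_node k y a)) x) = neg_clause (addr x k y)"
  by auto

lemma fst_refutation_top_slot:
  "k < n \<Longrightarrow> z < 2 * M \<Longrightarrow>
    fst (refutation x (pos (top_slot (Suc k) z))) = neg_clause (addr x (Suc k) z)"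
  using slot_ok_top_slot[of k z] by (auto simp: refutation_pos top_slot_def fst_dt_eval_node_tree_Iter)

lemma F_nonempty: "F \<noteq> []"
  using unsat by (auto simp: unsat_def)

lemma node_valid_padding: "P i = padding \<Longrightarrow> i \<noteq> Lp - 1 \<Longrightarrow> node_valid F P Lp i"
  by (rule node_valid_WeakI) (use F_nonempty in \<open>auto simp: padding_def clause_at_last Suc_le_eq\<close>)

lemma node_valid_Leaf:
  assumes "z < 2 * M"
  shows "node_valid F (refutation x) sF z"
proof -
  define r where "r = addr x n z"
  have "axiom_index r < length F \<and> F ! axiom_index r \<subseteq> neg_clause r"
    unfolding axiom_index_def r_def
    by (rule someI_ex) (use unsat_falsified_axiom[OF cnf_over unsat] in simp)
  moreover have "refutation x z = (neg_clause r, Weak (int (axiom_index r) - int (length F)))"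
    using refutation_pos[of "Leaf_node z"] assms by (simp add: r_def)
  ultimately show ?thesis
    using pos_neq_last[of "Leaf_node z"] assms by (intro node_valid_WeakI) auto
qed

lemma node_valid_Merge:
  assumes "k < n" "i < M"
  shows "node_valid F (refutation x) sF (pos (Merge_node k i))"
proof -
  define r where "r = addr x k (x (FB i))"
  have "refutation x (pos (Merge_node k i)) = (neg_clause r \<union> neg_clause r,
      Res (int (pos (top_slot (Suc k) (2 * i)))) (int (pos (top_slot (Suc k) (2 * i + 1)))) k)"
    using refutation_pos[of "Merge_node k i"] assms by (simp add: r_def)
  moreover have "fst (refutation x (pos (top_slot (Suc k) (2 * i)))) = insert (k, True) (neg_clause r)"
    and "fst (refutation x (pos (top_slot (Suc k) (2 * i + 1)))) = insert (k, False) (neg_clause r)"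
    using assms by (simp_all add: fst_refutation_top_slot r_def neg_clause_snoc)
  moreover have "pos (top_slot (Suc k) (2 * i)) < pos (Merge_node k i)"
    and "pos (top_slot (Suc k) (2 * i + 1)) < pos (Merge_node k i)"
    using assms pos_top_slot_less_Merge[of k "2 * i" i] pos_top_slot_less_Merge[of k "2 * i + 1" i]
    by simp_all
  ultimately show ?thesis
    using pos_neq_last[of "Merge_node k i"] assms by (intro node_valid_ResI) auto
qed

lemma node_valid_Iter_or_sol:
  assumes x: "x \<in> rw_dom L M" and slot: "k < n" "y < 2 * M" "a < L"
  shows "node_valid F (refutation x) sF (pos (Iter_node k y a)) \<or> rw_sol L M x (y, a)"
proof -
  define s g where "s = x (SB y a)" and "g = x (GB y a)"
  have s: "s < L" and g: "g < M"
    using rw_dom_SB_less[OF x] rw_dom_GB_less[OF x] slot by (simp_all add: s_def g_def)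
  have eval: "refutation x (pos (Iter_node k y a)) =
    (if iter_sol L (\<lambda>z. x (SB y z)) a then (neg_clause (addr x k y), Weak (int (pos (Merge_node k g))))
     else if a < s then (neg_clause (addr x k y), Weak (int (pos (Iter_node k y s))))
     else padding)"
    using slot refutation_pos[of "Iter_node k y a"] dt_eval_node_tree_Iter by (simp add: s_def g_def)
  have not_last: "pos (Iter_node k y a) \<noteq> sF - 1"
    using pos_neq_last[of "Iter_node k y a"] slot by simp
  consider (sol) "iter_sol L (\<lambda>z. x (SB y z)) a"
    | (ascent) "\<not> iter_sol L (\<lambda>z. x (SB y z)) a" "a < s"
    | (stuck) "\<not> iter_sol L (\<lambda>z. x (SB y z)) a" "\<not> a < s"
    by blast
  then show ?thesis
  proof cases
    case sol
    show ?thesis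
    proof (cases "x (FB g) = y")
      case True
      then have "fst (refutation x (pos (Merge_node k g))) = neg_clause (addr x k y)"
        using refutation_pos[of "Merge_node k g"] slot g by simp
      then show ?thesis
        using sol eval not_last pos_Merge_less_Iter[OF g] by (auto intro!: node_valid_WeakI)
    next
      case False
      then show ?thesis using sol slot by (simp add: rw_sol_def g_def)
    qed
  next
    case ascent
    then have "x (SB y s) \<noteq> s" using slot by (auto simp: iter_sol_def s_def)
    then have "fst (refutation x (pos (Iter_node k y s))) = neg_clause (addr x k y)"
      using refutation_pos[of "Iter_node k y s"] fst_dt_eval_node_tree_Iter slot s by simp
    then show ?thesis
      using ascent eval not_last pos_Iter_less_Iter[OF _ s] by (auto intro!: node_valid_WeakI)
  next
    case stuck
    then show ?thesis using eval not_last node_valid_padding by simp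
  qed
qed

lemma node_valid_last: "node_valid F (refutation x) sF (sF - 1)"
proof -
  have slot: "slot_ok (Iter_node 0 0 0)" using n_pos L_pos M_pos by simp
  then have "fst (refutation x (pos (Iter_node 0 0 0))) = {}"
    using refutation_pos[OF slot] fst_dt_eval_node_tree_Iter[of 0 x 0 0] by simp
  moreover have "pos (Iter_node 0 0 0) < sF - 1"
    using pos_less[OF slot] room by (simp add: width_def)
  moreover have "refutation x (sF - 1) = final"
    using slot_at_last by (simp add: refutation_def out_tree_def)
  ultimately show ?thesis by (intro node_valid_WeakI) (auto simp: final_def)
qed

lemma refutation_valid_or_sol:
  assumes "x \<in> rw_dom L M"
  shows "node_valid F (refutation x) sF j \<or> rw_sol L M x (sol_at j)"
proof (cases "slot_at j")
  case None
  then show ?thesis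
    using node_valid_last node_valid_padding[of "refutation x" j sF]
    by (cases "j = sF - 1") (auto simp: refutation_def out_tree_def)
next
  case (Some s)
  then have "slot_ok s" "j = pos s" using slot_at_SomeD by auto
  then show ?thesis
    using Some node_valid_Leaf node_valid_Merge node_valid_Iter_or_sol[OF assms]
    by (cases s) (auto simp: sol_at_def)
qed

lemma var_less_if_mem_refutation: "l \<in> fst (refutation x j) \<Longrightarrow> fst l < n"
proof -
  have last: "fst l < n" if "l \<in> last F" for l
    using that cnf_over F_nonempty by (auto simp: cnf_over_def)
  have addr: "fst l < n" if "l \<in> neg_clause (addr x k y)" "k \<le> n" for l k y
    using fst_less_length_if_neg_clause[OF that(1)] that(2) by simp
  assume "l \<in> fst (refutation x j)"
  then show ?thesis
  proof (cases "slot_at j")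
    case (Some s)
    then have "slot_ok s" using slot_at_SomeD by blast
    then show ?thesis
      using \<open>l \<in> fst (refutation x j)\<close> Some last addr
      by (cases s) (auto simp: refutation_def out_tree_def padding_def split: if_splits)
  qed (use last in \<open>auto simp: refutation_def out_tree_def padding_def final_def split: if_splits\<close>)
qed

lemma card_dt_blocks_node_tree: "slot_ok s \<Longrightarrow> card (dt_blocks (node_tree s) x) \<le> n + 3"
proof (cases s)
  case (Leaf_node z)
  then show ?thesis using card_dt_blocks_addr_tree[of n z x] by simp
next
  case (Merge_node k i)
  moreover assume "slot_ok s"
  ultimately show ?thesis
    using card_dt_blocks_addr_tree[of k "x (FB i)" x] by (simp add: card_insert_le_m1)
next
  case (Iter_node k y a)
  moreover assume "slot_ok s"
  ultimately show ?thesis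
    using card_dt_blocks_addr_tree[of k y x] by (simp add: card_insert_le_m1)
qed

lemma card_dt_blocks_out_tree: "card (dt_blocks (out_tree j) x) \<le> n + 3"
  using card_dt_blocks_node_tree slot_at_SomeD by (auto simp: out_tree_def split: option.split)

lemma dt_reduction_refutation:
  "dt_reduction (rw_dom L M) (rw_sol L M) (ref_dom n sF) (ref_sol F sF)
     out_tree (\<lambda>j. Leaf (sol_at j)) (4 * n)"
  unfolding dt_reduction_def
proof (intro ballI conjI allI impI)
  fix x assume x: "x \<in> rw_dom L M"
  show "(\<lambda>j. dt_eval (out_tree j) x) \<in> ref_dom n sF"
    using var_less_if_mem_refutation by (auto simp: ref_dom_def refutation_def)
  show "rw_sol L M x (dt_eval (Leaf (sol_at j)) x)" if "ref_sol F sF (\<lambda>j. dt_eval (out_tree j) x) j" for j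
    using that refutation_valid_or_sol[OF x, of j] by (auto simp: ref_sol_def refutation_def)
  show "card (dt_blocks (out_tree j) x) \<le> 4 * n" for j
    using card_dt_blocks_out_tree[of j x] n_pos by linarith
qed simp

end

lemma layout_size_less:
  fixes n L M m :: nat
  assumes "1 \<le> n" "1 \<le> L" "1 \<le> m"
  shows "2 * M + n * (M + 2 * M * L) < 6 * (n * L * M + m)"
proof -
  define P where "P = n * L * M"
  have "1 \<le> n * L" using assms by simp
  then have "M \<le> P" unfolding P_def by (metis mult_1 mult_le_mono1)
  moreover have "n * M \<le> P"
    unfolding P_def using assms(2) by (metis mult.assoc mult.commute mult_le_mono2 mult_1)
  moreover have "n * (M + 2 * M * L) = n * M + 2 * P" unfolding P_def by (simp add: algebra_simps)
  ultimately show ?thesis using assms(3) unfolding P_def[symmetric] by simp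
qed

theorem theorem4p4:
  shows "\<exists>C::nat. C \<ge> 2 \<and> (\<exists>K::nat. \<forall>L M n :: nat. \<forall>F :: cnf. \<forall>sF :: nat.
     L \<ge> 1 \<longrightarrow> M \<ge> 1 \<longrightarrow> n \<ge> 1 \<longrightarrow>
     cnf_over n F \<longrightarrow> unsat F \<longrightarrow>
     sF \<ge> C * (n * L * M + length F) \<longrightarrow>
     (\<forall>P Lp. is_refutation F P Lp \<longrightarrow> Lp > sF) \<longrightarrow>
     (\<exists>(Tout :: nat \<Rightarrow> (rw_block, nat, node) dtree) (Tsol :: nat \<Rightarrow> (rw_block, nat, nat \<times> nat) dtree).
        dt_reduction (rw_dom L M) (rw_sol L M) (ref_dom n sF) (ref_sol F sF) Tout Tsol (K * n)))"
proof -
  \<comment> \<open>The lower bound on refutation size only makes the Refuter instance total;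
    the reduction is correct without it.\<close>
  have "\<exists>Tout Tsol. dt_reduction (rw_dom L M) (rw_sol L M) (ref_dom n sF) (ref_sol F sF) Tout Tsol (4 * n)"
    if "1 \<le> L" "1 \<le> M" "1 \<le> n" "cnf_over n F" "unsat F" "6 * (n * L * M + length F) \<le> sF"
    for L M n F sF
  proof -
    have "1 \<le> length F" using \<open>unsat F\<close> by (cases F) (auto simp: unsat_def)
    then interpret rwphp_refuter n L M F sF
      using that layout_size_less[of n L "length F" M] by unfold_locales auto
    show ?thesis using dt_reduction_refutation by blast
  qed
  then show ?thesis by (intro exI[of _ 6] conjI exI[of _ 4]) auto
qed

end
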